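(* Let $\mathbb{K}$ be a field of characteristic $0$, let $F(n)$ be a holonomic sequence of order $J>0$, and let $L=\sum_{i=0}^{J}a_i(n)\sigma^i\in\operatorname{ann}F(n)$ with $a_0(n)a_J(n)\ne0$. Suppose $\gcd(a_0(n),a_J(n+h))=1$ for every $h\in\mathbb{N}=\{0,1,2,\dots\}$ and $L$ is nondegenerated. If $p(n)\in\mathbb{K}[n]$ is a nonzero polynomial such that $p(n)F(n)$ is summable, then \[\deg p(n)\ge \deg L + C_L.\]
   Context: $\sigma$ is the shift operator, $L(F(n))=\sum_i a_i(n)F(n+i)$, $\operatorname{ann}F(n)=\{L\in\mathbb{K}[n][\sigma]:L(F(n))=0\}$, $F$ holonomic means $\operatorname{ann}F\neq\{0\}$, and the order of $F$ is the minimal order of a nonzero element of $\operatorname{ann}F$. A holonomic sequence $G(n)$ of order $J$ is summable if $G(n)=\Delta\big(\sum_{i=0}^{J-1}u_i(n)G(n+i)\big)$ for some $u_i(n)\in\mathbb{K}(n)$, with $\Delta=\sigma-1$. Adjoint: $L^*(x(n))=\sum_{i=0}^J a_i(n-i)x(n-i)$. Put $b_k(n)=\sum_{j=k}^{J}\binom{j}{k}a_{J-j}(n+j-J)$, $d=\deg L=\max_{0\le k\le J}\{\deg b_k(n)-k\}$, $f(s)=\sum_{k=0}^{J}[n^{d+k}](b_k(n))\,s^{\underline{k}}$ (coefficient of $n^{d+k}$ in $b_k$ times the falling factorial $s(s-1)\cdots(s-k+1)$), and $R_L=\{s\in\mathbb{N}:f(s)=0\}$; $L$ is nondegenerated if $R_L=\emptyset$.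 Continued zero index $C_L$: if $L^*(1)\neq0$ then $C_L=0$; otherwise $C_L$ is the positive integer with $L^*(n^{C_L})\neq 0$ and $L^*(n^i)=0$ for $0\le i\le C_L-1$. *)

theory Defs
  imports "HOL-Computational_Algebra.Polynomial"
begin

text \<open>A recurrence operator L = sum_{i=0}^J a_i(n) sigma^i is represented by its
  order bound J and the coefficient function a :: nat => 'a poly (only a 0..a J matter).
  Sequences are functions nat => 'a; equalities of sequences are understood for all
  sufficiently large n (sequences modulo finitely many terms).\<close>

definition apply_op :: "nat \<Rightarrow> (nat \<Rightarrow> 'a::comm_ring_1 poly) \<Rightarrow> (nat \<Rightarrow> 'a) \<Rightarrow> nat \<Rightarrow> 'a" where
  "apply_op J a F n = (\<Sum>i\<le>J. poly (a i) (of_nat n) * F (n + i))"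

definition annihilates :: "nat \<Rightarrow> (nat \<Rightarrow> 'a::comm_ring_1 poly) \<Rightarrow> (nat \<Rightarrow> 'a) \<Rightarrow> bool" where
  "annihilates J a F \<longleftrightarrow> (\<forall>\<^sub>F n in sequentially. apply_op J a F n = 0)"

definition has_ann_of_order :: "(nat \<Rightarrow> 'a::comm_ring_1) \<Rightarrow> nat \<Rightarrow> bool" where
  "has_ann_of_order F m \<longleftrightarrow> (\<exists>a. a m \<noteq> 0 \<and> annihilates m a F)"

definition holonomic :: "(nat \<Rightarrow> 'a::comm_ring_1) \<Rightarrow> bool" where
  "holonomic F \<longleftrightarrow> (\<exists>m. has_ann_of_order F m)"

definition hol_order :: "(nat \<Rightarrow> 'a::comm_ring_1) \<Rightarrow> nat" where
  "hol_order F = (LEAST m. has_ann_of_order F m)"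

text \<open>Summability: G(n) = Delta(sum_{i<J} u_i(n) G(n+i)) with rational functions
  u_i = un i / ud i (ud i nonzero), J the order of G; equality for large n.\<close>
definition summable_seq :: "(nat \<Rightarrow> 'a::field) \<Rightarrow> bool" where
  "summable_seq G \<longleftrightarrow> holonomic G \<and>
     (\<exists>un ud :: nat \<Rightarrow> 'a poly. (\<forall>i<hol_order G. ud i \<noteq> 0) \<and>
        (let T = (\<lambda>n. \<Sum>i<hol_order G. poly (un i) (of_nat n) / poly (ud i) (of_nat n) * G (n + i))
         in \<forall>\<^sub>F n in sequentially. G n = T (Suc n) - T n))"

definition bcoef :: "nat \<Rightarrow> (nat \<Rightarrow> 'a::comm_ring_1 poly) \<Rightarrow> nat \<Rightarrow> 'a poly" where
  "bcoef J a k = (\<Sum>j=k..J. smult (of_nat (j choose k))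
       (pcompose (a (J - j)) [:of_int (int j - int J), 1:]))"

definition deg_op :: "nat \<Rightarrow> (nat \<Rightarrow> 'a::comm_ring_1 poly) \<Rightarrow> int" where
  "deg_op J a = Max {int (degree (bcoef J a k)) - int k | k. k \<le> J \<and> bcoef J a k \<noteq> 0}"

definition falling :: "'a::comm_ring_1 \<Rightarrow> nat \<Rightarrow> 'a" where
  "falling s k = (\<Prod>i<k. s - of_nat i)"

definition indicial :: "nat \<Rightarrow> (nat \<Rightarrow> 'a::comm_ring_1 poly) \<Rightarrow> 'a \<Rightarrow> 'a" where
  "indicial J a s = (\<Sum>k\<le>J. (if deg_op J a + int k \<ge> 0
        then coeff (bcoef J a k) (nat (deg_op J a + int k)) else 0) * falling s k)"

definition nondegenerated :: "nat \<Rightarrow> (nat \<Rightarrow> 'a::comm_ring_1 poly) \<Rightarrow> bool" where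
  "nondegenerated J a \<longleftrightarrow> {s::nat. indicial J a (of_nat s) = 0} = {}"

text \<open>Adjoint applied to n^c, as a polynomial: sum_i a_i(n-i) (n-i)^c.\<close>
definition adjoint_pow :: "nat \<Rightarrow> (nat \<Rightarrow> 'a::comm_ring_1 poly) \<Rightarrow> nat \<Rightarrow> 'a poly" where
  "adjoint_pow J a c = (\<Sum>i\<le>J. pcompose (a i) [:- of_nat i, 1:] * [:- of_nat i, 1:] ^ c)"

definition cont_zero_index :: "nat \<Rightarrow> (nat \<Rightarrow> 'a::comm_ring_1 poly) \<Rightarrow> nat" where
  "cont_zero_index J a = (LEAST c. adjoint_pow J a c \<noteq> 0)"

end

theory Submission
  imports Defs "HOL-Computational_Algebra.Polynomial_Factorial"
begin

text \<open>
  Summability provides rational functions v_i with p(n) F(n) = T(n+1) - T(n), where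
  T(n) = \<Sum>_{i<J} v_i(n) F(n+i). Eliminating F(n+J) by means of L leaves a relation of order
  below J, whose coefficients therefore vanish; unrolling these identities gives p = L^*(z)
  for the rational function z(n) = -v_{J-1}(n+1) / a_J(n).
  Write z = N/E in lowest terms. If an irreducible q divided E, let h_min \<le> h_max be the
  extreme integers h with q(n+h) | E(n). Clearing denominators in
  p(n) = \<Sum>_l a_l(n-l) N(n-l) / E(n-l) isolates q(n+h_max) in the term l = 0 and
  q(n+h_min-J) in the term l = J, so q(n+h_max) divides both a_0(n) and a_J(n+h_max-h_min),
  against the gcd hypothesis. Hence z is a polynomial Z. Newton's forward difference formula
  writes L^*(Z) as \<Sum>_k b_k(n) (\<Delta>^k Z)(n-J), whose coefficient of n^(deg L + deg Z) is
  f(deg Z) lc(Z) \<noteq> 0 by nondegeneracy. Finally f(0) \<noteq> 0 forces L^*(1) = b_0 \<noteq> 0, that is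
  C_L = 0.
\<close>

section \<open>Translation of polynomials\<close>

definition shift_poly :: "'a::comm_ring_1 poly \<Rightarrow> 'a \<Rightarrow> 'a poly" where
  "shift_poly w c = pcompose w [:c, 1:]"

lemma poly_shift_poly [simp]: "poly (shift_poly w c) x = poly w (x + c)"
  by (simp add: shift_poly_def poly_pcompose add.commute)

lemma shift_poly_shift_poly [simp]: "shift_poly (shift_poly w a) b = shift_poly w (a + b)"
  by (simp add: shift_poly_def pcompose_assoc[symmetric] pcompose_pCons ac_simps)

lemma shift_poly_0_right [simp]: "shift_poly w 0 = w"
  by (simp add: shift_poly_def)

lemma shift_poly_0 [simp]: "shift_poly 0 c = 0"
  by (simp add: shift_poly_def)

lemma shift_poly_const [simp]: "shift_poly [:c:] x = [:c:]"
  by (simp add: shift_poly_def)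

lemma shift_poly_mult: "shift_poly (p * q) c = shift_poly p c * shift_poly q c"
  by (simp add: shift_poly_def pcompose_mult)

lemma degree_shift_poly [simp]: "degree (shift_poly (w :: 'a::idom poly) c) = degree w"
  by (simp add: shift_poly_def degree_pcompose)

lemma lead_coeff_shift_poly [simp]: "lead_coeff (shift_poly (w :: 'a::idom poly) c) = lead_coeff w"
  by (simp add: shift_poly_def lead_coeff_comp)

lemma shift_poly_eq_0_iff [simp]: "shift_poly (w :: 'a::idom poly) c = 0 \<longleftrightarrow> w = 0"
  by (simp add: shift_poly_def pcompose_eq_0_iff)

lemma shift_poly_dvd_shift_poly_iff [simp]:
  "shift_poly f c dvd shift_poly g c \<longleftrightarrow> f dvd g"
proof
  show "f dvd g \<Longrightarrow> shift_poly f c dvd shift_poly g c"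
    by (auto simp: dvd_def shift_poly_mult)
  assume "shift_poly f c dvd shift_poly g c"
  then obtain k where "shift_poly g c = shift_poly f c * k" ..
  then have "shift_poly (shift_poly g c) (- c) = shift_poly (shift_poly f c) (- c) * shift_poly k (- c)"
    by (simp only: shift_poly_mult)
  then show "f dvd g" by simp
qed

lemma shift_poly_dvd_iff: "shift_poly f c dvd g \<longleftrightarrow> f dvd shift_poly g (- c)"
  using shift_poly_dvd_shift_poly_iff[of f c "shift_poly g (- c)"] by simp

lemma prime_elem_shift_poly:
  fixes q :: "'a::field poly"
  assumes "prime_elem q"
  shows "prime_elem (shift_poly q c)"
proof (rule prime_elemI)
  show "shift_poly q c \<noteq> 0" "\<not> is_unit (shift_poly q c)"
    using assms by (auto simp: is_unit_iff_degree prime_elem_def)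
  fix x y assume "shift_poly q c dvd x * y"
  then have "q dvd shift_poly x (- c) * shift_poly y (- c)"
    by (simp add: shift_poly_dvd_iff shift_poly_mult)
  then show "shift_poly q c dvd x \<or> shift_poly q c dvd y"
    using assms by (simp add: prime_elem_dvd_mult_iff shift_poly_dvd_iff)
qed

lemma coeff_shift_poly:
  fixes w :: "'a::comm_ring_1 poly"
  assumes "degree w \<le> Suc t"
  shows "coeff (shift_poly w c) t = coeff w t + of_nat (Suc t) * c * coeff w (Suc t)"
proof -
  have "pcompose ([:0, 1:] ^ i) [:c, 1:] = [:c, 1:] ^ i" for i
    by (induction i) (simp_all add: pcompose_mult pcompose_1 pcompose_pCons)
  then have "shift_poly w c = (\<Sum>i\<le>Suc t. smult (coeff w i) ([:c, 1:] ^ i))"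
    by (subst (1) poly_as_sum_of_monoms'[OF assms, symmetric])
       (simp only: shift_poly_def pcompose_sum monom_altdef pcompose_smult)
  then have "coeff (shift_poly w c) t = (\<Sum>i\<le>Suc t. coeff w i * coeff ([:c, 1:] ^ i) t)"
    by (simp add: coeff_sum)
  also have "\<dots> = (\<Sum>i<t. coeff w i * coeff ([:c, 1:] ^ i) t) + coeff w t + coeff w (Suc t) * (of_nat (Suc t) * c)"
    using coeff_linear_poly_power[of t "Suc t" c 1] coeff_linear_poly_power[of t t c 1]
    by (simp add: lessThan_Suc_atMost[symmetric] del: power_Suc)
  also have "(\<Sum>i<t. coeff w i * coeff ([:c, 1:] ^ i) t) = 0"
    by (intro sum.neutral ballI) (simp add: coeff_eq_0 degree_linear_power)
  finally show ?thesis by (simp add: mult_ac)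
qed

lemma coeff_shift_poly_top:
  assumes "degree w \<le> t"
  shows "coeff (shift_poly w c) t = coeff w t"
  using coeff_shift_poly[of w t c] assms by (simp add: coeff_eq_0)

lemma coeff_mult_at_degree_bounds:
  fixes f g :: "'a::comm_semiring_1 poly"
  assumes "degree f \<le> m" "degree g \<le> n"
  shows "coeff (f * g) (m + n) = coeff f m * coeff g n"
proof (cases "degree f = m \<and> degree g = n")
  case True
  then show ?thesis using coeff_mult_degree_sum[of f g] by simp
next
  case False
  then have "degree (f * g) < m + n"
    using assms degree_mult_le[of f g] by linarith
  then show ?thesis using assms False by (auto simp: coeff_eq_0 le_less)
qed

section \<open>Forward differences and the degree of the adjoint\<close>

definition fwd_diff :: "'a::comm_ring_1 poly \<Rightarrow> 'a poly" where
  "fwd_diff w = shift_poly w 1 - w"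

lemma poly_fwd_diff [simp]: "poly (fwd_diff w) y = poly w (y + 1) - poly w y"
  by (simp add: fwd_diff_def)

lemma fwd_diff_const [simp]: "fwd_diff [:c:] = 0"
  by (simp add: fwd_diff_def)

lemma fwd_diff_0 [simp]: "fwd_diff 0 = 0"
  by (simp add: fwd_diff_def)

lemma coeff_fwd_diff:
  assumes "degree w \<le> Suc t"
  shows "coeff (fwd_diff w) t = of_nat (Suc t) * coeff w (Suc t)"
  using coeff_shift_poly[OF assms, of 1] by (simp add: fwd_diff_def)

lemma degree_fwd_diff_le:
  fixes w :: "'a::idom poly"
  assumes "degree w \<le> Suc t"
  shows "degree (fwd_diff w) \<le> t"
proof (rule degree_le, intro allI impI)
  fix m assume "t < m"
  then consider "m = Suc t" | "Suc t < m" by linarith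
  then show "coeff (fwd_diff w) m = 0"
  proof cases
    case 1
    have "degree w \<le> Suc m" using assms 1 by simp
    from coeff_shift_poly[OF this, of 1] show ?thesis
      using assms by (simp add: 1 fwd_diff_def coeff_eq_0)
  qed (use assms in \<open>simp add: fwd_diff_def coeff_eq_0\<close>)
qed

lemma falling_Suc: "falling s (Suc k) = falling s k * (s - of_nat k)"
  by (simp add: falling_def)

lemma falling_0_Suc [simp]: "falling 0 (Suc k) = 0"
  unfolding falling_def by (simp only: prod.lessThan_Suc_shift) simp

lemma falling_of_nat_eq_0:
  assumes "s < k"
  shows "falling (of_nat s :: 'a::{comm_ring_1,ring_no_zero_divisors}) k = 0"
  unfolding falling_def using assms by (intro prod_zero) (auto intro!: bexI[of _ s])

lemma fwd_diff_iterate: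
  fixes Z :: "'a::idom poly"
  assumes "k \<le> degree Z"
  shows "degree ((fwd_diff ^^ k) Z) \<le> degree Z - k \<and>
    coeff ((fwd_diff ^^ k) Z) (degree Z - k) = falling (of_nat (degree Z)) k * lead_coeff Z"
  using assms
proof (induction k)
  case (Suc k)
  then have "degree ((fwd_diff ^^ k) Z) \<le> Suc (degree Z - Suc k)"
    and "coeff ((fwd_diff ^^ k) Z) (Suc (degree Z - Suc k)) = falling (of_nat (degree Z)) k * lead_coeff Z"
    by (simp_all add: Suc_diff_Suc)
  with Suc.prems show ?case
    by (simp add: degree_fwd_diff_le coeff_fwd_diff falling_Suc of_nat_diff mult_ac)
qed (simp add: falling_def)

lemma fwd_diff_iterate_eq_0:
  fixes Z :: "'a::idom poly"
  assumes "degree Z < k"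
  shows "(fwd_diff ^^ k) Z = 0"
proof -
  have "degree ((fwd_diff ^^ degree Z) Z) = 0"
    using fwd_diff_iterate[of "degree Z" Z] by simp
  then have "(fwd_diff ^^ Suc (degree Z)) Z = 0"
    by (auto elim: degree_eq_zeroE)
  moreover have "(fwd_diff ^^ m) 0 = 0" for m :: nat
    by (induction m) simp_all
  moreover obtain m where "k = m + Suc (degree Z)"
    using assms by (metis add.commute less_iff_Suc_add add_Suc_right)
  then have "(fwd_diff ^^ k) Z = (fwd_diff ^^ m) ((fwd_diff ^^ Suc (degree Z)) Z)"
    by (simp only: funpow_add comp_apply)
  ultimately show ?thesis by simp
qed

lemma sum_choose_pascal:
  fixes f :: "nat \<Rightarrow> 'a::comm_semiring_1"
  shows "(\<Sum>k\<le>j. of_nat (j choose k) * (f (Suc k) + f k)) = (\<Sum>k\<le>Suc j. of_nat (Suc j choose k) * f k)"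
proof -
  have rhs: "(\<Sum>k\<le>Suc j. of_nat (Suc j choose k) * f k)
      = (\<Sum>k\<le>j. of_nat (j choose k) * f (Suc k)) + (f 0 + (\<Sum>k\<le>j. of_nat (j choose Suc k) * f (Suc k)))"
    by (subst sum.atMost_Suc_shift) (simp add: sum.distrib algebra_simps)
  have shift: "f 0 + (\<Sum>k\<le>j. of_nat (j choose Suc k) * f (Suc k)) = (\<Sum>k\<le>j. of_nat (j choose k) * f k)"
    using sum.atMost_Suc_shift[of "\<lambda>k. of_nat (j choose k) * f k" j] by (simp add: binomial_eq_0)
  have lhs: "(\<Sum>k\<le>j. of_nat (j choose k) * (f (Suc k) + f k))
      = (\<Sum>k\<le>j. of_nat (j choose k) * f (Suc k)) + (\<Sum>k\<le>j. of_nat (j choose k) * f k)"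
    by (simp add: sum.distrib distrib_left)
  show ?thesis by (simp only: lhs rhs shift)
qed

lemma newton_forward_formula:
  "poly Z (y + of_nat j) = (\<Sum>k\<le>j. of_nat (j choose k) * poly ((fwd_diff ^^ k) Z) y)"
proof (induction j arbitrary: y)
  case (Suc j)
  have "poly Z (y + of_nat (Suc j)) = poly Z ((y + 1) + of_nat j)" by (simp add: ac_simps)
  also have "\<dots> = (\<Sum>k\<le>j. of_nat (j choose k) * (poly ((fwd_diff ^^ Suc k) Z) y + poly ((fwd_diff ^^ k) Z) y))"
    by (simp add: Suc)
  also have "\<dots> = (\<Sum>k\<le>Suc j. of_nat (Suc j choose k) * poly ((fwd_diff ^^ k) Z) y)"
    by (rule sum_choose_pascal)
  finally show ?case .
qed simp

lemma sum_triangle_swap: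
  fixes g :: "nat \<Rightarrow> nat \<Rightarrow> 'a::comm_monoid_add"
  shows "(\<Sum>j\<le>n. \<Sum>k\<le>j. g j k) = (\<Sum>k\<le>n. \<Sum>j=k..n. g j k)"
  by (induction n) (simp_all add: sum.distrib atLeastAtMostSuc_conv ac_simps)

definition adjoint_poly :: "nat \<Rightarrow> (nat \<Rightarrow> 'a::comm_ring_1 poly) \<Rightarrow> 'a poly \<Rightarrow> 'a poly" where
  "adjoint_poly J a Z = (\<Sum>l\<le>J. shift_poly (a l * Z) (- of_nat l))"

lemma poly_bcoef:
  "poly (bcoef J a k) x = (\<Sum>j=k..J. of_nat (j choose k) * poly (a (J - j)) (x + of_int (int j - int J)))"
  by (simp add: bcoef_def poly_sum poly_pcompose add.commute)

lemma adjoint_poly_eq_sum_bcoef: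
  fixes Z :: "'a::{idom,ring_char_0} poly"
  shows "adjoint_poly J a Z = (\<Sum>k\<le>J. bcoef J a k * shift_poly ((fwd_diff ^^ k) Z) (- of_nat J))"
proof -
  have "poly (adjoint_poly J a Z) (y + of_nat J)
      = poly (\<Sum>k\<le>J. bcoef J a k * shift_poly ((fwd_diff ^^ k) Z) (- of_nat J)) (y + of_nat J)" for y
  proof -
    have "poly (adjoint_poly J a Z) (y + of_nat J) = (\<Sum>l\<le>J. poly (a l) (y + of_nat (J - l)) * poly Z (y + of_nat (J - l)))"
      by (simp add: adjoint_poly_def poly_sum of_nat_diff algebra_simps)
    also have "\<dots> = (\<Sum>j\<le>J. poly (a (J - j)) (y + of_nat j) * poly Z (y + of_nat j))"
      by (rule sum.reindex_bij_witness[where i="\<lambda>j. J - j" and j="\<lambda>l. J - l"]) auto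
    also have "\<dots> = (\<Sum>j\<le>J. \<Sum>k\<le>j. of_nat (j choose k) * poly (a (J - j)) (y + of_nat j) * poly ((fwd_diff ^^ k) Z) y)"
      by (simp add: newton_forward_formula[of Z] sum_distrib_left mult_ac)
    also have "\<dots> = (\<Sum>k\<le>J. \<Sum>j=k..J. of_nat (j choose k) * poly (a (J - j)) (y + of_nat j) * poly ((fwd_diff ^^ k) Z) y)"
      by (rule sum_triangle_swap)
    also have "\<dots> = (\<Sum>k\<le>J. poly (bcoef J a k) (y + of_nat J) * poly ((fwd_diff ^^ k) Z) y)"
      by (intro sum.cong refl) (simp add: poly_bcoef sum_distrib_left of_nat_diff algebra_simps)
    finally show ?thesis by (simp add: poly_sum)
  qed
  from this[of "_ - of_nat J"] show ?thesis
    by (simp flip: poly_eq_poly_eq_iff add: fun_eq_iff)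
qed

lemma bcoef_degree_le:
  assumes "k \<le> J" "bcoef J a k \<noteq> 0"
  shows "int (degree (bcoef J a k)) \<le> deg_op J a + int k"
proof -
  have "finite {int (degree (bcoef J a k)) - int k | k. k \<le> J \<and> bcoef J a k \<noteq> 0}"
    by (rule finite_subset[of _ "(\<lambda>k. int (degree (bcoef J a k)) - int k) ` {..J}"]) auto
  then have "int (degree (bcoef J a k)) - int k \<le> deg_op J a"
    unfolding deg_op_def by (rule Max_ge) (use assms in auto)
  then show ?thesis by linarith
qed

lemma coeff_bcoef_mult_fwd_diff:
  fixes Z :: "'a::idom poly"
  assumes "k \<le> J" and "0 \<le> deg_op J a + int (degree Z)"
  shows "coeff (bcoef J a k * shift_poly ((fwd_diff ^^ k) Z) (- of_nat J)) (nat (deg_op J a + int (degree Z)))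
    = (if 0 \<le> deg_op J a + int k then coeff (bcoef J a k) (nat (deg_op J a + int k)) else 0)
      * falling (of_nat (degree Z)) k * lead_coeff Z"
proof (cases "k \<le> degree Z \<and> bcoef J a k \<noteq> 0")
  case True
  define t where "t = nat (deg_op J a + int k)"
  have "int (degree (bcoef J a k)) \<le> deg_op J a + int k"
    using assms True by (intro bcoef_degree_le) auto
  then have bound: "degree (bcoef J a k) \<le> t" and "0 \<le> deg_op J a + int k"
    by (auto simp: t_def)
  moreover have "nat (deg_op J a + int (degree Z)) = t + (degree Z - k)"
    using True \<open>0 \<le> deg_op J a + int k\<close> by (simp add: t_def)
  moreover have "degree ((fwd_diff ^^ k) Z) \<le> degree Z - k"
    and "coeff ((fwd_diff ^^ k) Z) (degree Z - k) = falling (of_nat (degree Z)) k * lead_coeff Z"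
    using fwd_diff_iterate[of k Z] True by auto
  ultimately show ?thesis
    by (simp add: coeff_mult_at_degree_bounds coeff_shift_poly_top t_def mult_ac)
next
  case False
  then show ?thesis
    by (auto simp: fwd_diff_iterate_eq_0 falling_of_nat_eq_0 not_le)
qed

lemma coeff_adjoint_poly:
  fixes Z :: "'a::{idom,ring_char_0} poly"
  assumes "0 \<le> deg_op J a + int (degree Z)"
  shows "coeff (adjoint_poly J a Z) (nat (deg_op J a + int (degree Z)))
    = indicial J a (of_nat (degree Z)) * lead_coeff Z"
  using assms
  by (simp add: adjoint_poly_eq_sum_bcoef coeff_sum coeff_bcoef_mult_fwd_diff indicial_def sum_distrib_right)

lemma indicial_nonzeroE:
  assumes "indicial J a s \<noteq> 0"
  obtains k where "0 \<le> deg_op J a + int k" and "coeff (bcoef J a k) (nat (deg_op J a + int k)) \<noteq> 0"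
    and "falling s k \<noteq> 0"
proof -
  obtain k where "(if 0 \<le> deg_op J a + int k then coeff (bcoef J a k) (nat (deg_op J a + int k)) else 0)
      * falling s k \<noteq> 0"
    using sum.not_neutral_contains_not_neutral[OF assms[unfolded indicial_def]] by auto
  then have "0 \<le> deg_op J a + int k" and "coeff (bcoef J a k) (nat (deg_op J a + int k)) \<noteq> 0"
    and "falling s k \<noteq> 0"
    by (auto split: if_splits)
  then show thesis
    by (rule that)
qed

lemma degree_adjoint_poly_ge:
  fixes Z :: "'a::{idom,ring_char_0} poly"
  assumes "nondegenerated J a" and "Z \<noteq> 0"
  shows "deg_op J a + int (degree Z) \<le> int (degree (adjoint_poly J a Z))"
proof -
  have indicial: "indicial J a (of_nat (degree Z)) \<noteq> 0"
    using assms(1) unfolding nondegenerated_def by blast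
  then obtain k where "0 \<le> deg_op J a + int k" and "falling (of_nat (degree Z) :: 'a) k \<noteq> 0"
    by (rule indicial_nonzeroE)
  moreover from this(2) have "k \<le> degree Z"
    by (meson falling_of_nat_eq_0 not_le)
  ultimately have nonneg: "0 \<le> deg_op J a + int (degree Z)"
    by linarith
  then have "coeff (adjoint_poly J a Z) (nat (deg_op J a + int (degree Z))) \<noteq> 0"
    using indicial assms(2) by (simp add: coeff_adjoint_poly)
  then show ?thesis
    using le_degree nonneg by fastforce
qed

lemma cont_zero_index_eq_0:
  assumes "nondegenerated J a"
  shows "cont_zero_index J a = 0"
proof -
  have "indicial J a (of_nat 0) \<noteq> 0"
    using assms unfolding nondegenerated_def by blast
  then obtain k where "coeff (bcoef J a k) (nat (deg_op J a + int k)) \<noteq> 0"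
    and "falling (of_nat 0 :: 'a) k \<noteq> 0"
    by (rule indicial_nonzeroE)
  moreover from this(2) have "k = 0"
    by (cases k) auto
  ultimately have "bcoef J a 0 \<noteq> 0"
    by auto
  moreover have "bcoef J a 0 = adjoint_pow J a 0"
    unfolding bcoef_def adjoint_pow_def atLeast0AtMost
    by (rule sum.reindex_bij_witness[where i="\<lambda>i. J - i" and j="\<lambda>j. J - j"]) (auto simp: of_nat_diff)
  ultimately show ?thesis
    unfolding cont_zero_index_def by (intro Least_eq_0) simp
qed

section \<open>Denominators of rational solutions of L^*(z) = p\<close>

lemma prime_elem_dvd_prod_iff:
  fixes p :: "'a::idom"
  assumes "prime_elem p" and "finite A"
  shows "p dvd (\<Prod>x\<in>A. f x) \<longleftrightarrow> (\<exists>x\<in>A. p dvd f x)"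
  using assms(2) by (induction A rule: finite_induct)
    (use assms(1) in \<open>auto simp: prime_elem_dvd_mult_iff prime_elem_not_unit\<close>)

lemma prime_elem_dvd_isolated_term:
  fixes r :: "'a::idom"
  assumes "prime_elem r" "finite A" "k \<in> A"
    and "(\<Sum>l\<in>A. f l * (\<Prod>j\<in>A-{l}. e j)) = P * (\<Prod>j\<in>A. e j)"
    and "r dvd e k" "\<forall>j\<in>A-{k}. \<not> r dvd e j"
  shows "r dvd f k"
proof -
  have r_dvd_prod: "r dvd (\<Prod>j\<in>B. e j)" if "finite B" "k \<in> B" for B
    using dvd_prodI[OF that, of e] assms(5) by (rule dvd_trans[rotated])
  have r_dvd_others: "r dvd f l * (\<Prod>j\<in>A-{l}. e j)" if "l \<in> A - {k}" for l
    using that assms(2,3) by (intro dvd_mult r_dvd_prod) auto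
  have "r dvd (\<Sum>l\<in>A. f l * (\<Prod>j\<in>A-{l}. e j))"
    unfolding assms(4) using assms(2,3) by (intro dvd_mult r_dvd_prod)
  then have "r dvd f k * (\<Prod>j\<in>A-{k}. e j) + (\<Sum>l\<in>A-{k}. f l * (\<Prod>j\<in>A-{l}. e j))"
    using assms(2,3) by (simp add: sum.remove)
  moreover have "r dvd (\<Sum>l\<in>A-{k}. f l * (\<Prod>j\<in>A-{l}. e j))"
    using r_dvd_others by (rule dvd_sum)
  ultimately have "r dvd f k * (\<Prod>j\<in>A-{k}. e j)"
    by (simp add: dvd_add_left_iff)
  then show ?thesis
    using assms(1,2,6) by (simp add: prime_elem_dvd_mult_iff prime_elem_dvd_prod_iff)
qed

lemma dvd_shift_poly_self_imp_eq_0: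
  fixes q :: "'a::field_char_0 poly"
  assumes "0 < degree q" and "q dvd shift_poly q c"
  shows "c = 0"
proof -
  from assms(2) obtain k where k: "shift_poly q c = q * k" ..
  have "q \<noteq> 0" using assms(1) by auto
  with k have "k \<noteq> 0" by auto
  with k \<open>q \<noteq> 0\<close> have "degree k = 0"
    using degree_mult_eq[of q k] degree_shift_poly[of q c] by simp
  then obtain e where e: "k = [:e:]" by (elim degree_eq_zeroE)
  have "lead_coeff q = lead_coeff (shift_poly q c)"
    by (rule lead_coeff_shift_poly[symmetric])
  also have "\<dots> = lead_coeff q * e"
    by (simp add: k e lead_coeff_mult)
  finally have "lead_coeff q = lead_coeff q * e" .
  with \<open>q \<noteq> 0\<close> have "shift_poly q c = q"
    using k e by simp
  obtain m where m: "degree q = Suc m" using assms(1) gr0_implies_Suc by blast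
  have "coeff (shift_poly q c) m = coeff q m + of_nat (Suc m) * c * lead_coeff q"
    using coeff_shift_poly[of q m c] m by simp
  with \<open>shift_poly q c = q\<close> \<open>q \<noteq> 0\<close> show "c = 0"
    by (simp del: of_nat_Suc)
qed

text \<open>For an arbitrary field \<open>'a\<close>, the library does not make \<open>'a poly\<close> a factorial
  semiring, so \<open>prime_divisor_exists\<close> is not available.\<close>

lemma field_poly_irreducible_divisor_exists:
  fixes E :: "'a::field poly"
  assumes "0 < degree E"
  obtains q where "irreducible q" and "q dvd E"
  using assms
proof (induction "degree E" arbitrary: E thesis rule: less_induct)
  case less
  show ?case
  proof (cases "irreducible E")
    case False
    have "E \<noteq> 0"
      using less.prems(2) by auto
    then have "\<not> is_unit E"
      using less.prems(2) by (simp add: is_unit_iff_degree)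
    with False \<open>E \<noteq> 0\<close> obtain x y where xy: "E = x * y" "\<not> is_unit x" "\<not> is_unit y"
      unfolding irreducible_def by blast
    with \<open>E \<noteq> 0\<close> have "0 < degree x" "0 < degree y" "x \<noteq> 0" "y \<noteq> 0"
      by (auto simp: is_unit_iff_degree)
    then have "degree x < degree E"
      by (simp add: xy(1) degree_mult_eq)
    with \<open>0 < degree x\<close> obtain q where "irreducible q" "q dvd x"
      using less.hyps by blast
    with xy(1) show ?thesis
      using less.prems(1) by auto
  qed (rule less.prems(1)[OF _ dvd_refl])
qed

lemma prod_pairwise_prime_divisors_dvd:
  fixes f :: "'b \<Rightarrow> 'a::idom"
  assumes "finite S" and "\<And>h. h \<in> S \<Longrightarrow> prime_elem (f h) \<and> f h dvd E"
    and "\<And>h1 h2. h1 \<in> S \<Longrightarrow> h2 \<in> S \<Longrightarrow> f h1 dvd f h2 \<Longrightarrow> h1 = h2"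
  shows "(\<Prod>h\<in>S. f h) dvd E"
  using assms
proof (induction S rule: finite_induct)
  case (insert h0 S)
  then obtain R where R: "E = (\<Prod>h\<in>S. f h) * R"
    by (auto elim: dvdE)
  have "\<not> f h0 dvd (\<Prod>h\<in>S. f h)"
    using insert by (simp add: prime_elem_dvd_prod_iff) blast
  moreover have "prime_elem (f h0)" "f h0 dvd E" using insert.prems(1) by auto
  ultimately have "f h0 dvd R"
    using R by (simp add: prime_elem_dvd_mult_iff)
  with R insert.hyps show ?case
    by (simp add: mult.commute mult_dvd_mono)
qed simp

lemma finite_shifts_dvd:
  fixes q E :: "'a::field_char_0 poly"
  assumes "prime_elem q" and "E \<noteq> 0"
  shows "finite {h::int. shift_poly q (of_int h) dvd E}" (is "finite ?H")
proof (rule ccontr)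
  assume "infinite ?H"
  then obtain S where S: "finite S" "card S = Suc (degree E)" "S \<subseteq> ?H"
    using infinite_arbitrarily_large by blast
  have "0 < degree q"
    using assms(1) is_unit_iff_degree[of q] by (auto simp: prime_elem_def)
  have "(\<Prod>h\<in>S. shift_poly q (of_int h)) dvd E"
  proof (rule prod_pairwise_prime_divisors_dvd)
    fix h1 h2 :: int
    assume "shift_poly q (of_int h1) dvd shift_poly q (of_int h2)"
    then have "q dvd shift_poly q (of_int h2 - of_int h1)"
      by (simp add: shift_poly_dvd_iff)
    then show "h1 = h2"
      using dvd_shift_poly_self_imp_eq_0[OF \<open>0 < degree q\<close>] by fastforce
  qed (use S assms(1) in \<open>auto simp: prime_elem_shift_poly\<close>)
  then have "degree (\<Prod>h\<in>S. shift_poly q (of_int h)) \<le> degree E"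
    using assms(2) by (rule dvd_imp_degree_le)
  moreover have "degree (\<Prod>h\<in>S. shift_poly q (of_int h)) = card S * degree q"
    using \<open>0 < degree q\<close> by (subst degree_prod_sum_eq) auto
  moreover have "card S \<le> card S * degree q"
    using \<open>0 < degree q\<close> by simp
  ultimately show False
    using S(2) by linarith
qed

lemma prime_elem_dvd_isolated_shift:
  fixes N E p r :: "'a::field poly"
  assumes "prime_elem r" and "coprime N E"
    and cleared: "p * (\<Prod>l\<le>J. shift_poly E (- of_nat l))
      = (\<Sum>l\<le>J. shift_poly (a l * N) (- of_nat l) * (\<Prod>j\<in>{..J}-{l}. shift_poly E (- of_nat j)))"
    and "k \<le> J" and "r dvd shift_poly E (- of_nat k)"
    and "\<And>j. j \<le> J \<Longrightarrow> j \<noteq> k \<Longrightarrow> \<not> r dvd shift_poly E (- of_nat j)"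
  shows "r dvd shift_poly (a k) (- of_nat k)"
proof -
  have "r dvd shift_poly (a k) (- of_nat k) * shift_poly N (- of_nat k)"
    using prime_elem_dvd_isolated_term[OF assms(1) finite_atMost _ cleared[symmetric]] assms(4-6)
    by (simp add: shift_poly_mult)
  moreover have "\<not> r dvd shift_poly N (- of_nat k)"
  proof
    assume "r dvd shift_poly N (- of_nat k)"
    with assms(5) have "shift_poly r (of_nat k) dvd N" "shift_poly r (of_nat k) dvd E"
      by (simp_all add: shift_poly_dvd_iff)
    with \<open>coprime N E\<close> have "is_unit (shift_poly r (of_nat k))"
      by (rule coprime_common_divisor)
    with prime_elem_shift_poly[OF assms(1)] show False
      by (simp add: prime_elem_def)
  qed
  ultimately show ?thesis
    using assms(1) by (simp add: prime_elem_dvd_mult_iff)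
qed

lemma adjoint_denominator_degree_eq_0:
  fixes N E p :: "'a::field_char_0 poly"
  assumes "E \<noteq> 0" and "coprime N E"
    and coprime_shifts: "\<forall>h::nat. coprime (a 0) (pcompose (a J) [:of_nat h, 1:])"
    and cleared: "p * (\<Prod>l\<le>J. shift_poly E (- of_nat l))
      = (\<Sum>l\<le>J. shift_poly (a l * N) (- of_nat l) * (\<Prod>j\<in>{..J}-{l}. shift_poly E (- of_nat j)))"
  shows "degree E = 0"
proof (rule ccontr)
  assume "degree E \<noteq> 0"
  then obtain q where "irreducible q" and "q dvd E"
    using field_poly_irreducible_divisor_exists by blast
  from \<open>irreducible q\<close> have q: "prime_elem q"
    by (rule field_poly_irreducible_imp_prime)
  define Q where "Q h = shift_poly q (of_int h)" for h :: int
  define H where "H = {h. Q h dvd E}"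
  have prime_Q: "prime_elem (Q h)" for h
    using q by (simp add: Q_def prime_elem_shift_poly)
  have "0 \<in> H" "finite H"
    using \<open>q dvd E\<close> finite_shifts_dvd[OF q \<open>E \<noteq> 0\<close>] by (simp_all add: H_def Q_def)
  define hM hm where "hM = Max H" and "hm = Min H"
  have "hM \<in> H" "hm \<in> H" and H_bounds: "\<And>h. h \<in> H \<Longrightarrow> hm \<le> h \<and> h \<le> hM"
    using \<open>finite H\<close> \<open>0 \<in> H\<close> by (auto simp: hM_def hm_def intro: Max_in Min_in)
  have Q_dvd_E_shift: "Q h dvd shift_poly E (- of_nat j) \<longleftrightarrow> h + int j \<in> H" for h j
    by (simp add: Q_def H_def shift_poly_dvd_iff algebra_simps)
  have Q_dvd_E: "Q h dvd E \<longleftrightarrow> h \<in> H" for h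
    by (simp add: H_def)
  have "Q hM dvd shift_poly (a 0) (- of_nat 0)"
    using \<open>hM \<in> H\<close> by (intro prime_elem_dvd_isolated_shift[OF prime_Q \<open>coprime N E\<close> cleared])
      (auto simp: Q_dvd_E_shift Q_dvd_E dest: H_bounds)
  then have "Q hM dvd a 0"
    by simp
  have "Q (hm - int J) dvd shift_poly (a J) (- of_nat J)"
    using \<open>hm \<in> H\<close> by (intro prime_elem_dvd_isolated_shift[OF prime_Q \<open>coprime N E\<close> cleared])
      (auto simp: Q_dvd_E_shift Q_dvd_E dest: H_bounds)
  then have "Q hm dvd a J"
    by (simp add: Q_def shift_poly_dvd_iff[symmetric])
  then have "shift_poly (Q hm) (of_nat (nat (hM - hm))) dvd shift_poly (a J) (of_nat (nat (hM - hm)))"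
    by (simp only: shift_poly_dvd_shift_poly_iff)
  moreover have "shift_poly (Q hm) (of_nat (nat (hM - hm))) = Q hM"
    using H_bounds[OF \<open>hM \<in> H\<close>] by (simp add: Q_def)
  ultimately have "Q hM dvd pcompose (a J) [:of_nat (nat (hM - hm)), 1:]"
    by (simp add: shift_poly_def)
  with \<open>Q hM dvd a 0\<close> have "is_unit (Q hM)"
    using coprime_shifts coprime_common_divisor by blast
  with prime_Q show False
    by (simp add: prime_elem_def)
qed

section \<open>Rational sequences\<close>

lemma eventually_poly_of_nat_nonzero:
  fixes P :: "'a::{idom,ring_char_0} poly"
  assumes "P \<noteq> 0"
  shows "\<forall>\<^sub>F n in sequentially. poly P (of_nat n) \<noteq> 0"
proof -
  have "finite (of_nat -` {x :: 'a. poly P x = 0})"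
    using poly_roots_finite[OF assms] by (rule finite_vimageI) (simp add: inj_on_def)
  then show ?thesis
    by (simp add: vimage_def eventually_cofinite flip: cofinite_eq_sequentially)
qed

lemma poly_eqI_eventually:
  fixes P Q :: "'a::{idom,ring_char_0} poly"
  assumes "\<forall>\<^sub>F n in sequentially. poly P (of_nat n) = poly Q (of_nat n)"
  shows "P = Q"
proof (rule ccontr)
  assume "P \<noteq> Q"
  then have "\<forall>\<^sub>F n in sequentially. poly (P - Q) (of_nat n) \<noteq> 0"
    by (intro eventually_poly_of_nat_nonzero) simp
  with assms have "\<forall>\<^sub>F n in sequentially. False"
    by eventually_elim simp
  then show False by simp
qed

text \<open>Rational functions P(n)/Q(n) are handled through the sequences of their values,
  which are only determined for large n.\<close>

definition rational_seq :: "(nat \<Rightarrow> 'a::comm_ring_1) \<Rightarrow> bool" where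
  "rational_seq s \<longleftrightarrow>
     (\<exists>P Q. Q \<noteq> 0 \<and> (\<forall>\<^sub>F n in sequentially. poly Q (of_nat n) * s n = poly P (of_nat n)))"

lemma rational_seqE:
  assumes "rational_seq s"
  obtains P Q where "Q \<noteq> 0" and "\<forall>\<^sub>F n in sequentially. poly Q (of_nat n) * s n = poly P (of_nat n)"
  using assms by (auto simp: rational_seq_def)

lemma rational_seq_poly: "rational_seq (\<lambda>n. poly P (of_nat n))"
  unfolding rational_seq_def by (rule exI[of _ P], rule exI[of _ 1]) simp

lemma rational_seq_0: "rational_seq (\<lambda>n. 0)"
  using rational_seq_poly[of 0] by simp

lemma rational_seq_add:
  fixes s t :: "nat \<Rightarrow> 'a::idom"
  assumes "rational_seq s" and "rational_seq t"
  shows "rational_seq (\<lambda>n. s n + t n)"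
proof -
  obtain P Q where "Q \<noteq> 0" and s: "\<forall>\<^sub>F n in sequentially. poly Q (of_nat n) * s n = poly P (of_nat n)"
    using assms(1) by (rule rational_seqE)
  obtain P' Q' where "Q' \<noteq> 0" and t: "\<forall>\<^sub>F n in sequentially. poly Q' (of_nat n) * t n = poly P' (of_nat n)"
    using assms(2) by (rule rational_seqE)
  have "\<forall>\<^sub>F n in sequentially. poly (Q * Q') (of_nat n) * (s n + t n) = poly (P * Q' + P' * Q) (of_nat n)"
    using s t by eventually_elim (simp add: algebra_simps flip: mult.assoc)
  moreover have "Q * Q' \<noteq> 0"
    using \<open>Q \<noteq> 0\<close> \<open>Q' \<noteq> 0\<close> by simp
  ultimately show ?thesis
    unfolding rational_seq_def by blast
qed

lemma rational_seq_uminus: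
  assumes "rational_seq s"
  shows "rational_seq (\<lambda>n. - s n)"
proof -
  obtain P Q where "Q \<noteq> 0" and s: "\<forall>\<^sub>F n in sequentially. poly Q (of_nat n) * s n = poly P (of_nat n)"
    using assms by (rule rational_seqE)
  from s have "\<forall>\<^sub>F n in sequentially. poly Q (of_nat n) * (- s n) = poly (- P) (of_nat n)"
    by eventually_elim simp
  with \<open>Q \<noteq> 0\<close> show ?thesis
    unfolding rational_seq_def by blast
qed

lemma rational_seq_diff:
  fixes s t :: "nat \<Rightarrow> 'a::idom"
  assumes "rational_seq s" and "rational_seq t"
  shows "rational_seq (\<lambda>n. s n - t n)"
  using rational_seq_add[OF assms(1) rational_seq_uminus[OF assms(2)]] by simp

lemma rational_seq_mult:
  fixes s t :: "nat \<Rightarrow> 'a::idom"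
  assumes "rational_seq s" and "rational_seq t"
  shows "rational_seq (\<lambda>n. s n * t n)"
proof -
  obtain P Q where "Q \<noteq> 0" and s: "\<forall>\<^sub>F n in sequentially. poly Q (of_nat n) * s n = poly P (of_nat n)"
    using assms(1) by (rule rational_seqE)
  obtain P' Q' where "Q' \<noteq> 0" and t: "\<forall>\<^sub>F n in sequentially. poly Q' (of_nat n) * t n = poly P' (of_nat n)"
    using assms(2) by (rule rational_seqE)
  have "\<forall>\<^sub>F n in sequentially. poly (Q * Q') (of_nat n) * (s n * t n) = poly (P * P') (of_nat n)"
    using s t
  proof eventually_elim
    case (elim n)
    have "poly (Q * Q') (of_nat n) * (s n * t n) = (poly Q (of_nat n) * s n) * (poly Q' (of_nat n) * t n)"
      by (simp add: ac_simps)
    with elim show ?case by simp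
  qed
  moreover have "Q * Q' \<noteq> 0"
    using \<open>Q \<noteq> 0\<close> \<open>Q' \<noteq> 0\<close> by simp
  ultimately show ?thesis
    unfolding rational_seq_def by blast
qed

lemma rational_seq_shift:
  fixes s :: "nat \<Rightarrow> 'a::idom"
  assumes "rational_seq s"
  shows "rational_seq (\<lambda>n. s (n + k))"
proof -
  obtain P Q where "Q \<noteq> 0" and s: "\<forall>\<^sub>F n in sequentially. poly Q (of_nat n) * s n = poly P (of_nat n)"
    using assms by (rule rational_seqE)
  have "\<forall>\<^sub>F n in sequentially. poly Q (of_nat (n + k)) * s (n + k) = poly P (of_nat (n + k))"
    using eventually_sequentially_seg[of "\<lambda>n. poly Q (of_nat n) * s n = poly P (of_nat n)" k] s by blast
  then have "\<forall>\<^sub>F n in sequentially.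
      poly (shift_poly Q (of_nat k)) (of_nat n) * s (n + k) = poly (shift_poly P (of_nat k)) (of_nat n)"
    by simp
  with \<open>Q \<noteq> 0\<close> show ?thesis
    unfolding rational_seq_def by (metis shift_poly_eq_0_iff)
qed

lemma rational_seq_divide_poly:
  fixes s :: "nat \<Rightarrow> 'a::field_char_0"
  assumes "rational_seq s" and "A \<noteq> 0"
  shows "rational_seq (\<lambda>n. s n / poly A (of_nat n))"
proof -
  obtain P Q where "Q \<noteq> 0" and s: "\<forall>\<^sub>F n in sequentially. poly Q (of_nat n) * s n = poly P (of_nat n)"
    using assms(1) by (rule rational_seqE)
  have "\<forall>\<^sub>F n in sequentially. poly (Q * A) (of_nat n) * (s n / poly A (of_nat n)) = poly P (of_nat n)"
    using s eventually_poly_of_nat_nonzero[OF assms(2)] by eventually_elim simp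
  moreover have "Q * A \<noteq> 0"
    using \<open>Q \<noteq> 0\<close> assms(2) by simp
  ultimately show ?thesis
    unfolding rational_seq_def by blast
qed

lemma rational_seq_common_denominator:
  fixes c :: "'i \<Rightarrow> nat \<Rightarrow> 'a::idom"
  assumes "finite I" and "\<And>i. i \<in> I \<Longrightarrow> rational_seq (c i)"
  obtains Q P where "Q \<noteq> 0"
    and "\<forall>\<^sub>F n in sequentially. \<forall>i\<in>I. poly Q (of_nat n) * c i n = poly (P i) (of_nat n)"
  using assms
proof (induction I arbitrary: thesis rule: finite_induct)
  case empty
  show ?case by (rule empty.prems(1)[of 1]) simp_all
next
  case (insert i I)
  obtain Q P where "Q \<noteq> 0"
    and IH: "\<forall>\<^sub>F n in sequentially. \<forall>j\<in>I. poly Q (of_nat n) * c j n = poly (P j) (of_nat n)"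
    using insert.IH insert.prems(2) by blast
  obtain Pi Qi where "Qi \<noteq> 0"
    and ci: "\<forall>\<^sub>F n in sequentially. poly Qi (of_nat n) * c i n = poly Pi (of_nat n)"
    using insert.prems(2) by (blast elim: rational_seqE)
  let ?P = "\<lambda>j. if j = i then Pi * Q else P j * Qi"
  have "Q * Qi \<noteq> 0"
    using \<open>Q \<noteq> 0\<close> \<open>Qi \<noteq> 0\<close> by simp
  moreover have "\<forall>\<^sub>F n in sequentially. \<forall>j\<in>insert i I. poly (Q * Qi) (of_nat n) * c j n = poly (?P j) (of_nat n)"
    using IH ci
  proof eventually_elim
    case (elim n)
    then show ?case
      using insert.hyps(2) by (auto simp: mult_ac)
  qed
  ultimately show ?case
    by (rule insert.prems(1))
qed

lemma rational_seq_coprime_repr: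
  fixes s :: "nat \<Rightarrow> 'a::field_char_0"
  assumes "rational_seq s"
  obtains N E where "E \<noteq> 0" and "coprime N E"
    and "\<forall>\<^sub>F n in sequentially. poly E (of_nat n) * s n = poly N (of_nat n)"
proof -
  define repr where "repr N E \<longleftrightarrow>
    E \<noteq> 0 \<and> (\<forall>\<^sub>F n in sequentially. poly E (of_nat n) * s n = poly N (of_nat n))" for N E
  define m where "m = (LEAST m. \<exists>N E. repr N E \<and> degree E = m)"
  have "\<exists>m N E. repr N E \<and> degree E = m"
    using assms by (auto simp: rational_seq_def repr_def)
  from LeastI_ex[OF this] obtain N E where NE: "repr N E" "degree E = m"
    unfolding m_def by blast
  have minimal: "m \<le> degree E'" if "repr N' E'" for N' E'
    unfolding m_def using that by (blast intro: Least_le)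
  have "coprime N E"
  proof (rule coprimeI)
    fix c assume "c dvd N" "c dvd E"
    then obtain N' E' where N: "N = c * N'" and E: "E = c * E'"
      by (auto elim!: dvdE)
    have "c \<noteq> 0" "E' \<noteq> 0"
      using NE(1) E by (auto simp: repr_def)
    have "\<forall>\<^sub>F n in sequentially. poly E' (of_nat n) * s n = poly N' (of_nat n)"
      using NE(1)[unfolded repr_def, THEN conjunct2] eventually_poly_of_nat_nonzero[OF \<open>c \<noteq> 0\<close>]
      by eventually_elim (simp add: N E mult.assoc)
    with \<open>E' \<noteq> 0\<close> have "degree E \<le> degree E'"
      using minimal NE(2) by (simp add: repr_def)
    then have "degree c = 0"
      using \<open>c \<noteq> 0\<close> \<open>E' \<noteq> 0\<close> by (simp add: E degree_mult_eq)
    with \<open>c \<noteq> 0\<close> show "is_unit c"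
      by (simp add: is_unit_iff_degree)
  qed
  with NE(1) show thesis
    using that by (auto simp: repr_def)
qed

section \<open>From summability to the adjoint equation\<close>

lemma poly_coeffs_eq_0_below_hol_order:
  fixes F :: "nat \<Rightarrow> 'a::comm_ring_1"
  assumes "hol_order F = J"
    and "\<forall>\<^sub>F n in sequentially. (\<Sum>i<J. poly (c i) (of_nat n) * F (n + i)) = 0"
  shows "\<forall>i<J. c i = 0"
proof (rule ccontr)
  assume "\<not> (\<forall>i<J. c i = 0)"
  then have nonempty: "{i. i < J \<and> c i \<noteq> 0} \<noteq> {}" by auto
  define m where "m = Max {i. i < J \<and> c i \<noteq> 0}"
  have m: "m < J" "c m \<noteq> 0"
    using Max_in[OF _ nonempty] by (auto simp: m_def)
  have above: "c i = 0" if "m < i" "i < J" for i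
    using Max_ge[of "{i. i < J \<and> c i \<noteq> 0}" i] that by (fastforce simp: m_def)
  have "apply_op m c F n = (\<Sum>i<J. poly (c i) (of_nat n) * F (n + i))" for n
    unfolding apply_op_def by (rule sum.mono_neutral_left) (use m above in auto)
  with assms(2) have "annihilates m c F"
    by (simp add: annihilates_def)
  with m(2) have "hol_order F \<le> m"
    unfolding hol_order_def has_ann_of_order_def by (blast intro: Least_le)
  with assms(1) m(1) show False by simp
qed

lemma eventually_rational_coeffs_eq_0_below_hol_order:
  fixes F :: "nat \<Rightarrow> 'a::field_char_0"
  assumes "hol_order F = J" and "\<And>i. i < J \<Longrightarrow> rational_seq (c i)"
    and "\<forall>\<^sub>F n in sequentially. (\<Sum>i<J. c i n * F (n + i)) = 0"
  shows "\<forall>\<^sub>F n in sequentially. \<forall>i<J. c i n = 0"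
proof -
  obtain Q P where "Q \<noteq> 0"
    and QP: "\<forall>\<^sub>F n in sequentially. \<forall>i\<in>{..<J}. poly Q (of_nat n) * c i n = poly (P i) (of_nat n)"
    using rational_seq_common_denominator[of "{..<J}" c] assms(2) by auto
  have "\<forall>\<^sub>F n in sequentially. (\<Sum>i<J. poly (P i) (of_nat n) * F (n + i)) = 0"
    using QP assms(3)
  proof eventually_elim
    case (elim n)
    have "(\<Sum>i<J. poly (P i) (of_nat n) * F (n + i)) = (\<Sum>i<J. poly Q (of_nat n) * c i n * F (n + i))"
      using elim(1) by (intro sum.cong) auto
    also have "\<dots> = poly Q (of_nat n) * (\<Sum>i<J. c i n * F (n + i))"
      by (simp add: sum_distrib_left mult.assoc)
    finally show ?case
      using elim(2) by simp
  qed
  then have P0: "\<forall>i<J. P i = 0"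
    using assms(1) by (rule poly_coeffs_eq_0_below_hol_order[rotated])
  from QP eventually_poly_of_nat_nonzero[OF \<open>Q \<noteq> 0\<close>] show ?thesis
    by eventually_elim (use P0 in auto)
qed

lemma hol_order_poly_mult_le:
  fixes F :: "nat \<Rightarrow> 'a::idom"
  assumes "annihilates J a F" and "a J \<noteq> 0" and "p \<noteq> 0"
  shows "hol_order (\<lambda>n. poly p (of_nat n) * F n) \<le> J"
proof -
  define b where "b i = a i * (\<Prod>j\<in>{..J}-{i}. shift_poly p (of_nat j))" for i
  have "apply_op J b (\<lambda>n. poly p (of_nat n) * F n) n = (\<Prod>j\<le>J. poly p (of_nat (n + j))) * apply_op J a F n" for n
    unfolding apply_op_def sum_distrib_left
  proof (rule sum.cong[OF refl])
    fix i assume "i \<in> {..J}"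
    then have "(\<Prod>j\<le>J. poly p (of_nat (n + j)))
        = poly p (of_nat (n + i)) * (\<Prod>j\<in>{..J}-{i}. poly p (of_nat (n + j)))"
      by (subst prod.remove[of _ i]) auto
    then show "poly (b i) (of_nat n) * (poly p (of_nat (n + i)) * F (n + i))
        = (\<Prod>j\<le>J. poly p (of_nat (n + j))) * (poly (a i) (of_nat n) * F (n + i))"
      by (simp add: b_def poly_prod add.commute mult_ac)
  qed
  with assms(1) have "annihilates J b (\<lambda>n. poly p (of_nat n) * F n)"
    unfolding annihilates_def by (auto elim: eventually_mono)
  moreover have "b J \<noteq> 0"
    using assms(2,3) by (simp add: b_def)
  ultimately show ?thesis
    unfolding hol_order_def has_ann_of_order_def by (blast intro: Least_le)
qed

lemma telescoping_relation_reduce: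
  fixes F A :: "nat \<Rightarrow> 'a::field" and v :: "nat \<Rightarrow> nat \<Rightarrow> 'a"
  assumes "0 < J"
    and telescoping: "g * F n = (\<Sum>i<J. v i (Suc n) * F (Suc n + i)) - (\<Sum>i<J. v i n * F (n + i))"
    and annihilated: "(\<Sum>i\<le>J. A i * F (n + i)) = 0" and "A J \<noteq> 0"
  shows "(\<Sum>i<J. ((if i = 0 then - g else v (i - 1) (Suc n)) - v i n
      + - v (J - 1) (Suc n) / A J * A i) * F (n + i)) = 0"
proof -
  obtain J0 where J: "J = Suc J0"
    using assms(1) gr0_implies_Suc by blast
  define z where "z = v J0 (Suc n) / A J"
  define w where "w i = (if i = 0 then - g else v (i - 1) (Suc n))" for i
  have w_sum: "(\<Sum>i<J. w i * F (n + i)) = - g * F n + (\<Sum>i<J0. v i (Suc n) * F (Suc n + i))"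
    unfolding J w_def by (subst sum.lessThan_Suc_shift) simp
  have "(\<Sum>i\<le>J. A i * F (n + i)) = (\<Sum>i<J. A i * F (n + i)) + A J * F (n + J)"
    by (simp add: lessThan_Suc_atMost[symmetric])
  then have A_sum: "(\<Sum>i<J. A i * F (n + i)) = - (A J * F (n + J))"
    using annihilated by (simp add: eq_neg_iff_add_eq_0)
  have v_sum: "(\<Sum>i<J. v i (Suc n) * F (Suc n + i))
      = (\<Sum>i<J0. v i (Suc n) * F (Suc n + i)) + z * (A J * F (n + J))"
    using \<open>A J \<noteq> 0\<close> by (simp add: J z_def)
  have "(\<Sum>i<J. (w i - v i n - z * A i) * F (n + i))
      = (\<Sum>i<J. w i * F (n + i)) - (\<Sum>i<J. v i n * F (n + i)) - z * (\<Sum>i<J. A i * F (n + i))"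
    by (simp add: algebra_simps sum_subtractf sum_distrib_left sum.distrib)
  also have "\<dots> = - g * F n + (\<Sum>i<J. v i (Suc n) * F (Suc n + i)) - (\<Sum>i<J. v i n * F (n + i))"
    unfolding w_sum A_sum v_sum by (simp add: algebra_simps)
  also have "\<dots> = 0"
    using telescoping by simp
  finally show ?thesis
    by (simp add: w_def z_def J)
qed

lemma telescoping_recurrence_unroll:
  fixes v A :: "nat \<Rightarrow> nat \<Rightarrow> 'a::comm_ring_1"
  assumes "0 < J"
    and "\<forall>\<^sub>F m in sequentially.
      \<forall>i<J. (if i = 0 then - g m else v (i - 1) (Suc m)) - v i m + z m * A i m = 0"
    and "\<forall>\<^sub>F m in sequentially. v (J - 1) (Suc m) = - (z m * A J m)"
  shows "\<forall>\<^sub>F m in sequentially. g m = (\<Sum>l\<le>J. A l (m - l) * z (m - l))"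
proof -
  obtain N where step: "\<And>i m. i < J \<Longrightarrow> N \<le> m \<Longrightarrow>
      (if i = 0 then - g m else v (i - 1) (Suc m)) - v i m + z m * A i m = 0"
    and last: "\<And>m. N \<le> m \<Longrightarrow> v (J - 1) (Suc m) = - (z m * A J m)"
    using eventually_conj[OF assms(2,3)] by (auto simp: eventually_sequentially)
  have unrolled: "v i m = (\<Sum>l\<le>i. z (m + i - l) * A l (m + i - l)) - g (m + i)"
    if "i < J" "N \<le> m" for i m
    using that
  proof (induction i arbitrary: m)
    case 0
    then show ?case
      using step[of 0 m] by (simp add: algebra_simps)
  next
    case (Suc i)
    have "v (Suc i) m = v i (Suc m) + z m * A (Suc i) m"
      using step[of "Suc i" m] Suc.prems by (simp add: algebra_simps)
    also have "v i (Suc m) = (\<Sum>l\<le>i. z (m + Suc i - l) * A l (m + Suc i - l)) - g (m + Suc i)"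
      using Suc.IH[of "Suc m"] Suc.prems by simp
    finally show ?case
      by (simp add: algebra_simps)
  qed
  obtain J0 where J: "J = Suc J0"
    using assms(1) gr0_implies_Suc by blast
  have "g m = (\<Sum>l\<le>J. A l (m - l) * z (m - l))" if "N + J \<le> m" for m
  proof -
    have "(\<Sum>l\<le>J0. z (m - l) * A l (m - l)) - g m = - (z (m - J) * A J (m - J))"
      using unrolled[of J0 "Suc (m - J)"] last[of "m - J"] that by (simp add: J Suc_diff_Suc)
    then show ?thesis
      using that by (simp add: J algebra_simps)
  qed
  then show ?thesis
    unfolding eventually_sequentially by blast
qed

lemma summable_poly_mult_certificate:
  fixes F :: "nat \<Rightarrow> 'a::field_char_0"
  assumes "annihilates J a F" and "a J \<noteq> 0" and "p \<noteq> 0"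
    and "summable_seq (\<lambda>n. poly p (of_nat n) * F n)"
  obtains v where "\<And>i. i < J \<Longrightarrow> rational_seq (v i)"
    and "\<forall>\<^sub>F n in sequentially. poly p (of_nat n) * F n
      = (\<Sum>i<J. v i (Suc n) * F (Suc n + i)) - (\<Sum>i<J. v i n * F (n + i))"
proof -
  define G where "G = (\<lambda>n. poly p (of_nat n) * F n)"
  define J' where "J' = hol_order G"
  have "J' \<le> J"
    using hol_order_poly_mult_le[OF assms(1-3)] by (simp add: J'_def G_def)
  obtain un ud where ud: "\<forall>i<J'. ud i \<noteq> 0" and telescoping: "\<forall>\<^sub>F n in sequentially.
      G n = (\<Sum>i<J'. poly (un i) (of_nat (Suc n)) / poly (ud i) (of_nat (Suc n)) * G (Suc n + i))
          - (\<Sum>i<J'. poly (un i) (of_nat n) / poly (ud i) (of_nat n) * G (n + i))"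
    using assms(4) unfolding summable_seq_def Let_def G_def[symmetric] J'_def[symmetric] by blast
  define v where "v i n = (if i < J'
      then poly (un i) (of_nat n) / poly (ud i) (of_nat n) * poly p (of_nat (n + i)) else 0)" for i n
  have "rational_seq (v i)" for i
  proof (cases "i < J'")
    case True
    have "rational_seq (\<lambda>n. poly (un i) (of_nat n) / poly (ud i) (of_nat n))"
      using ud True by (intro rational_seq_divide_poly rational_seq_poly) auto
    moreover have "rational_seq (\<lambda>n. poly p (of_nat (n + i)))"
      by (rule rational_seq_shift[OF rational_seq_poly])
    ultimately show ?thesis
      using rational_seq_mult True unfolding v_def by fastforce
  qed (simp add: v_def[abs_def] rational_seq_0)
  moreover have T_eq: "(\<Sum>i<J'. poly (un i) (of_nat n) / poly (ud i) (of_nat n) * G (n + i))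
      = (\<Sum>i<J. v i n * F (n + i))" for n
    using \<open>J' \<le> J\<close> by (intro sum.mono_neutral_cong_left) (auto simp: v_def G_def)
  moreover have "\<forall>\<^sub>F n in sequentially. poly p (of_nat n) * F n
      = (\<Sum>i<J. v i (Suc n) * F (Suc n + i)) - (\<Sum>i<J. v i n * F (n + i))"
    using telescoping unfolding T_eq by (simp add: G_def)
  ultimately show thesis
    using that by blast
qed

lemma eventually_sequentially_diff:
  assumes "\<forall>\<^sub>F n in sequentially. P n"
  shows "\<forall>\<^sub>F n in sequentially. \<forall>l\<le>J. P (n - l)"
proof -
  obtain N where "\<And>n. N \<le> n \<Longrightarrow> P n"
    using assms by (auto simp: eventually_sequentially)
  then show ?thesis
    unfolding eventually_sequentially by (intro exI[of _ "N + J"]) auto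
qed

lemma telescoping_imp_adjoint_rational_solution:
  fixes F :: "nat \<Rightarrow> 'a::field_char_0"
  assumes "hol_order F = J" and "0 < J" and "annihilates J a F" and "a J \<noteq> 0"
    and rational: "\<And>i. i < J \<Longrightarrow> rational_seq (v i)"
    and telescoping: "\<forall>\<^sub>F n in sequentially. poly p (of_nat n) * F n
      = (\<Sum>i<J. v i (Suc n) * F (Suc n + i)) - (\<Sum>i<J. v i n * F (n + i))"
  obtains z where "rational_seq z"
    and "\<forall>\<^sub>F n in sequentially. poly p (of_nat n) = (\<Sum>l\<le>J. poly (a l) (of_nat (n - l)) * z (n - l))"
proof -
  define z where "z n = - v (J - 1) (Suc n) / poly (a J) (of_nat n)" for n
  define c where "c i n = (if i = 0 then - poly p (of_nat n) else v (i - 1) (Suc n)) - v i n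
      + z n * poly (a i) (of_nat n)" for i n
  have "rational_seq z"
    using rational_seq_shift[OF rational[of "J - 1"], of 1] \<open>0 < J\<close> \<open>a J \<noteq> 0\<close>
    unfolding z_def[abs_def] by (intro rational_seq_divide_poly rational_seq_uminus) simp_all
  have "rational_seq (c i)" if "i < J" for i
  proof -
    have "rational_seq (\<lambda>n. if i = 0 then - poly p (of_nat n) else v (i - 1) (Suc n))"
      using rational_seq_shift[OF rational[of "i - 1"], of 1] rational_seq_poly[of "- p"] that
      by (cases "i = 0") simp_all
    from rational_seq_add[OF rational_seq_diff[OF this rational[OF that]]
        rational_seq_mult[OF \<open>rational_seq z\<close> rational_seq_poly[of "a i"]]]
    show ?thesis
      unfolding c_def[abs_def] by simp
  qed
  moreover have "\<forall>\<^sub>F n in sequentially. (\<Sum>i<J. c i n * F (n + i)) = 0"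
    using telescoping assms(3)[unfolded annihilates_def] eventually_poly_of_nat_nonzero[OF \<open>a J \<noteq> 0\<close>]
  proof eventually_elim
    case (elim n)
    show ?case
      unfolding c_def z_def
      by (rule telescoping_relation_reduce[OF \<open>0 < J\<close> elim(1)])
        (use elim(2,3) in \<open>simp_all add: apply_op_def\<close>)
  qed
  ultimately have c_eq_0: "\<forall>\<^sub>F n in sequentially. \<forall>i<J. c i n = 0"
    by (rule eventually_rational_coeffs_eq_0_below_hol_order[OF assms(1)])
  have "\<forall>\<^sub>F n in sequentially. poly p (of_nat n) = (\<Sum>l\<le>J. poly (a l) (of_nat (n - l)) * z (n - l))"
  proof (rule telescoping_recurrence_unroll[OF \<open>0 < J\<close>, where A = "\<lambda>i n. poly (a i) (of_nat n)"])
    show "\<forall>\<^sub>F n in sequentially. \<forall>i<J. (if i = 0 then - poly p (of_nat n) else v (i - 1) (Suc n))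
        - v i n + z n * poly (a i) (of_nat n) = 0"
      using c_eq_0 by (simp add: c_def)
    show "\<forall>\<^sub>F n in sequentially. v (J - 1) (Suc n) = - (z n * poly (a J) (of_nat n))"
      using eventually_poly_of_nat_nonzero[OF \<open>a J \<noteq> 0\<close>] by eventually_elim (simp add: z_def)
  qed
  with \<open>rational_seq z\<close> show thesis
    by (rule that)
qed

lemma poly_shift_poly_of_nat_diff:
  assumes "l \<le> n"
  shows "poly (shift_poly w (- of_nat l)) (of_nat n) = poly w (of_nat (n - l))"
  using assms by (simp add: of_nat_diff)

lemma poly_adjoint_poly_of_nat:
  assumes "J \<le> n"
  shows "poly (adjoint_poly J a Z) (of_nat n) = (\<Sum>l\<le>J. poly (a l) (of_nat (n - l)) * poly Z (of_nat (n - l)))"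
  using assms by (simp add: adjoint_poly_def poly_sum poly_shift_poly_of_nat_diff del: poly_shift_poly)

lemma adjoint_rational_solution_cleared:
  fixes p N E :: "'a::field_char_0 poly"
  assumes adjoint: "\<forall>\<^sub>F n in sequentially. poly p (of_nat n) = (\<Sum>l\<le>J. poly (a l) (of_nat (n - l)) * z (n - l))"
    and repr: "\<forall>\<^sub>F n in sequentially. poly E (of_nat n) * z n = poly N (of_nat n)"
  shows "p * (\<Prod>l\<le>J. shift_poly E (- of_nat l))
    = (\<Sum>l\<le>J. shift_poly (a l * N) (- of_nat l) * (\<Prod>j\<in>{..J}-{l}. shift_poly E (- of_nat j)))"
proof (rule poly_eqI_eventually)
  show "\<forall>\<^sub>F n in sequentially. poly (p * (\<Prod>l\<le>J. shift_poly E (- of_nat l))) (of_nat n)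
    = poly (\<Sum>l\<le>J. shift_poly (a l * N) (- of_nat l) * (\<Prod>j\<in>{..J}-{l}. shift_poly E (- of_nat j))) (of_nat n)"
    using adjoint eventually_sequentially_diff[OF repr, of J] eventually_ge_at_top[of J]
  proof eventually_elim
    case (elim n)
    let ?E = "\<lambda>j. poly E (of_nat (n - j))"
    have "poly p (of_nat n) * (\<Prod>j\<le>J. ?E j) = (\<Sum>l\<le>J. poly (a l) (of_nat (n - l)) * z (n - l) * (\<Prod>j\<le>J. ?E j))"
      using elim(1) by (simp add: sum_distrib_right)
    also have "\<dots> = (\<Sum>l\<le>J. poly (a l) (of_nat (n - l)) * poly N (of_nat (n - l)) * (\<Prod>j\<in>{..J}-{l}. ?E j))"
    proof (rule sum.cong[OF refl])
      fix l assume "l \<in> {..J}"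
      then have "(\<Prod>j\<le>J. ?E j) = ?E l * (\<Prod>j\<in>{..J}-{l}. ?E j)"
        by (subst prod.remove[of _ l]) auto
      with elim(2) \<open>l \<in> {..J}\<close> show "poly (a l) (of_nat (n - l)) * z (n - l) * (\<Prod>j\<le>J. ?E j)
          = poly (a l) (of_nat (n - l)) * poly N (of_nat (n - l)) * (\<Prod>j\<in>{..J}-{l}. ?E j)"
        by (simp add: mult_ac)
    qed
    finally show ?case
      using elim(3) by (simp add: poly_prod poly_sum poly_shift_poly_of_nat_diff del: poly_shift_poly)
  qed
qed

lemma adjoint_rational_solution_is_poly:
  fixes p :: "'a::field_char_0 poly"
  assumes coprime_shifts: "\<forall>h::nat. coprime (a 0) (pcompose (a J) [:of_nat h, 1:])"
    and "rational_seq z"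
    and adjoint: "\<forall>\<^sub>F n in sequentially. poly p (of_nat n) = (\<Sum>l\<le>J. poly (a l) (of_nat (n - l)) * z (n - l))"
  obtains Z where "p = adjoint_poly J a Z"
proof -
  obtain N E where "E \<noteq> 0" "coprime N E"
    and repr: "\<forall>\<^sub>F n in sequentially. poly E (of_nat n) * z n = poly N (of_nat n)"
    using \<open>rational_seq z\<close> by (rule rational_seq_coprime_repr)
  have "degree E = 0"
    using adjoint_denominator_degree_eq_0[OF \<open>E \<noteq> 0\<close> \<open>coprime N E\<close> coprime_shifts
        adjoint_rational_solution_cleared[OF adjoint repr]] .
  then obtain e where "E = [:e:]" and "e \<noteq> 0"
    using \<open>E \<noteq> 0\<close> by (metis degree_eq_zeroE pCons_0_0)
  define Z where "Z = smult (inverse e) N"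
  have "p = adjoint_poly J a Z"
  proof (rule poly_eqI_eventually)
    show "\<forall>\<^sub>F n in sequentially. poly p (of_nat n) = poly (adjoint_poly J a Z) (of_nat n)"
      using adjoint eventually_sequentially_diff[OF repr, of J] eventually_ge_at_top[of J]
    proof eventually_elim
      case (elim n)
      have z_eq: "z (n - l) = poly Z (of_nat (n - l))" if "l \<le> J" for l
        using elim(2) that \<open>e \<noteq> 0\<close> by (simp add: Z_def \<open>E = [:e:]\<close> field_simps)
      have "poly p (of_nat n) = (\<Sum>l\<le>J. poly (a l) (of_nat (n - l)) * poly Z (of_nat (n - l)))"
        unfolding elim(1) by (rule sum.cong[OF refl], subst z_eq) auto
      with elim(3) show ?case
        by (simp add: poly_adjoint_poly_of_nat)
    qed
  qed
  then show thesis
    by (rule that)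
qed

theorem theorem2p6:
  fixes F :: "nat \<Rightarrow> 'a::field_char_0" and J :: nat and a :: "nat \<Rightarrow> 'a poly" and p :: "'a poly"
  assumes "holonomic F" and "hol_order F = J" and "J > 0"
    and "annihilates J a F" and "a 0 \<noteq> 0" and "a J \<noteq> 0"
    and "\<forall>h::nat. coprime (a 0) (pcompose (a J) [:of_nat h, 1:])"
    and "nondegenerated J a"
    and "p \<noteq> 0" and "summable_seq (\<lambda>n. poly p (of_nat n) * F n)"
  shows "int (degree p) \<ge> deg_op J a + int (cont_zero_index J a)"
proof -
  obtain v where "\<And>i. i < J \<Longrightarrow> rational_seq (v i)"
    and telescoping: "\<forall>\<^sub>F n in sequentially. poly p (of_nat n) * F n
      = (\<Sum>i<J. v i (Suc n) * F (Suc n + i)) - (\<Sum>i<J. v i n * F (n + i))"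
    using summable_poly_mult_certificate[OF assms(4,6,9,10)] by blast
  then obtain z where "rational_seq z"
    and "\<forall>\<^sub>F n in sequentially. poly p (of_nat n) = (\<Sum>l\<le>J. poly (a l) (of_nat (n - l)) * z (n - l))"
    using telescoping_imp_adjoint_rational_solution[OF assms(2,3,4,6)] by blast
  then obtain Z where p: "p = adjoint_poly J a Z"
    using adjoint_rational_solution_is_poly[OF assms(7)] by blast
  with \<open>p \<noteq> 0\<close> have "Z \<noteq> 0"
    by (auto simp: adjoint_poly_def)
  with p have "deg_op J a \<le> int (degree p)"
    using degree_adjoint_poly_ge[OF assms(8)] by fastforce
  then show ?thesis
    using cont_zero_index_eq_0[OF assms(8)] by simp
qed

end
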